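(* For any atomic proposition $p$, there exists an adequate $p$-removing mapping $\mathsf{re}_p:\mathcal P\times\mathcal P\to\mathcal P$.
   Context: Formulas are built from $\bot$ and atoms by $\to$ and $\Box$; sequents $\Gamma\Rightarrow\Delta$ have finite multisets of formulas on each side; $\Box\Pi$ denotes $\{\Box B:B\in\Pi\}$. The calculus $\mathsf{Grz}_\infty+\mathsf{cut}$ has initial sequents $\Gamma,p\Rightarrow p,\Delta$ ($p$ atomic), $\Gamma,\bot\Rightarrow\Delta$, and rules $(\to_L)$ from $\Gamma,B\Rightarrow\Delta$ and $\Gamma\Rightarrow A,\Delta$ infer $\Gamma,A\to B\Rightarrow\Delta$; $(\to_R)$ from $\Gamma,A\Rightarrow B,\Delta$ infer $\Gamma\Rightarrow A\to B,\Delta$; $(\mathsf{refl})$ from $\Gamma,B,\Box B\Rightarrow\Delta$ infer $\Gamma,\Box B\Rightarrow\Delta$; $(\Box)$ from left premise $\Gamma,\Box\Pi\Rightarrow A,\Delta$ and right premise $\Box\Pi\Rightarrow A$ infer $\Gamma,\Box\Pi\Rightarrow\Box A,\Delta$; $(\mathsf{cut})$ from $\Gamma\Rightarrow A,\Delta$ and $\Gamma,A\Rightarrow\Delta$ infer $\Gamma\Rightarrow\Delta$. An $\infty$-proof is a possibly infinite tree of sequents built by these rules with leaves labelled by initial sequents, in which every infinite branch passes through a right premise of $(\Box)$ infinitely often; $\mathcal P$ is the set of all $\infty$-proofs. The $n$-fragment of an $\infty$-proof is the finite tree obtained by cutting every branch at the $n$-th (from the root) right premise of $(\Box)$. Write $\pi\sim_n\tau$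 if the $n$-fragments of $\pi,\tau$ coincide, and $\pi\sim_0\tau$ always. $\mathcal P_n$ is the set of $\infty$-proofs with no application of $(\mathsf{cut})$ in their $n$-fragment, and $\mathcal P_0=\mathcal P$. A pair $(\pi,\tau)$ is a cut pair with cut formula $A$ and cut result $\Gamma\Rightarrow\Delta$ if $\pi$ is an $\infty$-proof of $\Gamma\Rightarrow\Delta,A$ and $\tau$ is an $\infty$-proof of $A,\Gamma\Rightarrow\Delta$. A mapping $\mathsf u:\mathcal P\times\mathcal P\to\mathcal P$ is $A$-removing if it is non-expansive (i.e. $\pi\sim_n\pi'$ and $\tau\sim_n\tau'$ imply $\mathsf u(\pi,\tau)\sim_n\mathsf u(\pi',\tau')$ for all $n$) and maps every cut pair with cut formula $A$ to an $\infty$-proof of its cut result. It is adequate if for every $n\in\mathbb N$, $\pi,\tau\in\mathcal P_n$ implies $\mathsf u(\pi,\tau)\in\mathcal P_n$. *)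

theory Defs
  imports Main "HOL-Library.Multiset"
begin

datatype 'a fm = FBot | FAt 'a | FImp "'a fm" "'a fm" | FBox "'a fm"

type_synonym 'a seq = "'a fm multiset \<times> 'a fm multiset"

datatype rl = RAx | RBotL | RImpL | RImpR | RRefl | RBox | RCut

fun arity :: "rl \<Rightarrow> nat" where
  "arity RAx = 0" | "arity RBotL = 0" | "arity RImpL = 2" | "arity RImpR = 1"
| "arity RRefl = 1" | "arity RBox = 2" | "arity RCut = 2"

text \<open>A possibly infinite tree: a partial labelling of positions (lists of child indices)
  by a sequent and the rule applied at that node. Child i of position xs is xs @ [i].
  For binary rules, child 0 is the left premise and child 1 the right premise.\<close>
type_synonym 'a ptree = "nat list \<Rightarrow> ('a seq \<times> rl) option"

definition seq_at :: "'a ptree \<Rightarrow> nat list \<Rightarrow> 'a seq" where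
  "seq_at T xs = fst (the (T xs))"

definition rule_at :: "'a ptree \<Rightarrow> nat list \<Rightarrow> rl" where
  "rule_at T xs = snd (the (T xs))"

definition wf_tree :: "'a ptree \<Rightarrow> bool" where
  "wf_tree T \<longleftrightarrow> T [] \<noteq> None \<and>
     (\<forall>xs i. T (xs @ [i]) \<noteq> None \<longleftrightarrow> (T xs \<noteq> None \<and> i < arity (rule_at T xs)))"

definition local_ok :: "'a ptree \<Rightarrow> nat list \<Rightarrow> bool" where
  "local_ok T xs \<longleftrightarrow>
    (let S = seq_at T xs; c0 = seq_at T (xs @ [0]); c1 = seq_at T (xs @ [1]) in
     case rule_at T xs of
       RAx \<Rightarrow> (\<exists>p. FAt p \<in># fst S \<and> FAt p \<in># snd S)
     | RBotL \<Rightarrow> FBot \<in># fst S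
     | RImpL \<Rightarrow> (\<exists>\<Gamma> \<Delta> A B. S = (add_mset (FImp A B) \<Gamma>, \<Delta>) \<and>
                  c0 = (add_mset B \<Gamma>, \<Delta>) \<and> c1 = (\<Gamma>, add_mset A \<Delta>))
     | RImpR \<Rightarrow> (\<exists>\<Gamma> \<Delta> A B. S = (\<Gamma>, add_mset (FImp A B) \<Delta>) \<and>
                  c0 = (add_mset A \<Gamma>, add_mset B \<Delta>))
     | RRefl \<Rightarrow> (\<exists>\<Gamma> \<Delta> B. S = (add_mset (FBox B) \<Gamma>, \<Delta>) \<and>
                  c0 = (add_mset B (add_mset (FBox B) \<Gamma>), \<Delta>))
     | RBox \<Rightarrow> (\<exists>\<Gamma> \<Pi> \<Delta> A. S = (\<Gamma> + image_mset FBox \<Pi>, add_mset (FBox A) \<Delta>) \<and>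
                  c0 = (\<Gamma> + image_mset FBox \<Pi>, add_mset A \<Delta>) \<and>
                  c1 = (image_mset FBox \<Pi>, {#A#}))
     | RCut \<Rightarrow> (\<exists>A. c0 = (fst S, add_mset A (snd S)) \<and> c1 = (add_mset A (fst S), snd S)))"

definition right_box_prem :: "'a ptree \<Rightarrow> nat list \<Rightarrow> bool" where
  "right_box_prem T ys \<longleftrightarrow> ys \<noteq> [] \<and> last ys = 1 \<and> T (butlast ys) \<noteq> None
     \<and> rule_at T (butlast ys) = RBox"

definition box_count :: "'a ptree \<Rightarrow> nat list \<Rightarrow> nat" where
  "box_count T xs = card {k. 1 \<le> k \<and> k \<le> length xs \<and> right_box_prem T (take k xs)}"

definition is_inf_proof :: "'a ptree \<Rightarrow> bool" where
  "is_inf_proof T \<longleftrightarrow> wf_tree T \<and> (\<forall>xs. T xs \<noteq> None \<longrightarrow> local_ok T xs) \<and>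
     (\<forall>f :: nat \<Rightarrow> nat. (\<forall>k. T (map f [0..<k]) \<noteq> None) \<longrightarrow>
        infinite {k. right_box_prem T (map f [0..<Suc k])})"

definition PP :: "'a ptree set" where
  "PP = {T. is_inf_proof T}"

definition concl :: "'a ptree \<Rightarrow> 'a seq" where
  "concl T = seq_at T []"

text \<open>The n-fragment: nodes all of whose proper ancestors lie strictly below the n-th
  right premise of (box); at nodes that are themselves the n-th such premise only the
  sequent is kept (the branch is cut there).\<close>
definition fragment :: "nat \<Rightarrow> 'a ptree \<Rightarrow> nat list \<Rightarrow> ('a seq \<times> rl option) option" where
  "fragment n T xs =
     (if T xs \<noteq> None \<and> (\<forall>k < length xs. box_count T (take k xs) < n)
      then Some (seq_at T xs, if box_count T xs < n then Some (rule_at T xs) else None)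
      else None)"

definition sim :: "nat \<Rightarrow> 'a ptree \<Rightarrow> 'a ptree \<Rightarrow> bool" where
  "sim n T T' \<longleftrightarrow> n = 0 \<or> fragment n T = fragment n T'"

definition PPn :: "nat \<Rightarrow> 'a ptree set" where
  "PPn n = {T \<in> PP. \<forall>xs. fragment n T xs \<noteq> None \<longrightarrow> box_count T xs < n \<longrightarrow> rule_at T xs \<noteq> RCut}"

definition maps_into_PP :: "('a ptree \<Rightarrow> 'a ptree \<Rightarrow> 'a ptree) \<Rightarrow> bool" where
  "maps_into_PP u \<longleftrightarrow> (\<forall>\<pi> \<in> PP. \<forall>\<tau> \<in> PP. u \<pi> \<tau> \<in> PP)"

definition non_expansive :: "('a ptree \<Rightarrow> 'a ptree \<Rightarrow> 'a ptree) \<Rightarrow> bool" where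
  "non_expansive u \<longleftrightarrow> (\<forall>n. \<forall>\<pi>\<in>PP. \<forall>\<pi>'\<in>PP. \<forall>\<tau>\<in>PP. \<forall>\<tau>'\<in>PP.
      sim n \<pi> \<pi>' \<longrightarrow> sim n \<tau> \<tau>' \<longrightarrow> sim n (u \<pi> \<tau>) (u \<pi>' \<tau>'))"

definition cut_pair :: "'a fm \<Rightarrow> 'a ptree \<Rightarrow> 'a ptree \<Rightarrow> 'a seq \<Rightarrow> bool" where
  "cut_pair A \<pi> \<tau> S \<longleftrightarrow> \<pi> \<in> PP \<and> \<tau> \<in> PP \<and>
     concl \<pi> = (fst S, add_mset A (snd S)) \<and> concl \<tau> = (add_mset A (fst S), snd S)"

definition removing :: "'a fm \<Rightarrow> ('a ptree \<Rightarrow> 'a ptree \<Rightarrow> 'a ptree) \<Rightarrow> bool" where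
  "removing A u \<longleftrightarrow> maps_into_PP u \<and> non_expansive u \<and>
     (\<forall>\<pi> \<tau> S. cut_pair A \<pi> \<tau> S \<longrightarrow> u \<pi> \<tau> \<in> PP \<and> concl (u \<pi> \<tau>) = S)"

definition adequate :: "('a ptree \<Rightarrow> 'a ptree \<Rightarrow> 'a ptree) \<Rightarrow> bool" where
  "adequate u \<longleftrightarrow> (\<forall>n. \<forall>\<pi> \<tau>. \<pi> \<in> PPn n \<longrightarrow> \<tau> \<in> PPn n \<longrightarrow> u \<pi> \<tau> \<in> PPn n)"

end

theory Submission
  imports Defs
begin

text \<open>Every \<open>\<infinity>\<close>-proof has a finite local derivation: the part of it below the first right
  premises of \<open>(\<box>)\<close>, which become open leaves. It exists because every infinite branch passes
  such a premise. An atomic cut between the local derivations of \<open>\<pi>\<close> and \<open>\<tau>\<close> is admissible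
  in the finite calculus with open leaves (invertibility of \<open>(\<rightarrow>\<^sub>R)\<close>, \<open>(\<rightarrow>\<^sub>L)\<close> and of \<open>(\<box>)\<close> on
  the left premise, plus contraction of atoms), and the elimination introduces neither cuts nor
  new open leaves. Grafting the subproofs of \<open>\<pi>\<close> and \<open>\<tau>\<close> above the open leaves back onto the
  result gives \<open>re\<^sub>p(\<pi>, \<tau>)\<close>. The local derivation is determined by any nonzero fragment, and
  the grafted subproofs lie above one more right premise of \<open>(\<box>)\<close>; so the \<open>n\<close>-fragment of the
  result depends only on the \<open>n\<close>-fragments of \<open>\<pi>\<close> and \<open>\<tau>\<close>, and is cut-free when they are.\<close>

section \<open>Admissibility of atomic cut in finite derivations with open leaves\<close>

text \<open>The right premise of \<open>(\<box>)\<close> is not derived: it must be an open leaf taken from \<open>X\<close>,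
  together with a tag \<open>b\<close>. Cuts are available only when \<open>cf\<close> is false.\<close>

inductive derivable :: "('a seq \<times> 'b) set \<Rightarrow> bool \<Rightarrow> 'a seq \<Rightarrow> bool" for X cf where
  ax: "FAt q \<in># \<Gamma> \<Longrightarrow> FAt q \<in># \<Delta> \<Longrightarrow> derivable X cf (\<Gamma>, \<Delta>)"
| botL: "FBot \<in># \<Gamma> \<Longrightarrow> derivable X cf (\<Gamma>, \<Delta>)"
| impL: "derivable X cf (add_mset B \<Gamma>, \<Delta>) \<Longrightarrow> derivable X cf (\<Gamma>, add_mset A \<Delta>) \<Longrightarrow>
    derivable X cf (add_mset (FImp A B) \<Gamma>, \<Delta>)"
| impR: "derivable X cf (add_mset A \<Gamma>, add_mset B \<Delta>) \<Longrightarrow> derivable X cf (\<Gamma>, add_mset (FImp A B) \<Delta>)"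
| refl: "derivable X cf (add_mset B (add_mset (FBox B) \<Gamma>), \<Delta>) \<Longrightarrow>
    derivable X cf (add_mset (FBox B) \<Gamma>, \<Delta>)"
| box: "derivable X cf (\<Gamma> + image_mset FBox \<Pi>, add_mset A \<Delta>) \<Longrightarrow> ((image_mset FBox \<Pi>, {#A#}), b) \<in> X \<Longrightarrow>
    derivable X cf (\<Gamma> + image_mset FBox \<Pi>, add_mset (FBox A) \<Delta>)"
| cut: "\<not> cf \<Longrightarrow> derivable X cf (\<Gamma>, add_mset A \<Delta>) \<Longrightarrow> derivable X cf (add_mset A \<Gamma>, \<Delta>) \<Longrightarrow>
    derivable X cf (\<Gamma>, \<Delta>)"

lemma mset_add_eq_cases:
  assumes "add_mset a M = add_mset b N"
  obtains "a = b" "M = N" | K where "M = add_mset b K" "N = add_mset a K" "a \<noteq> b"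
  using assms by (metis add_eq_conv_ex)

lemma derivable_weaken:
  "derivable X cf (\<Gamma>, \<Delta>) \<Longrightarrow> derivable X cf (\<Gamma> + \<Gamma>', \<Delta> + \<Delta>')"
proof (induction "(\<Gamma>, \<Delta>)" arbitrary: \<Gamma> \<Delta> rule: derivable.induct)
  case (ax q \<Gamma> \<Delta>) then show ?case by (auto intro: derivable.ax)
next
  case (botL \<Gamma> \<Delta>) then show ?case by (auto intro: derivable.botL)
next
  case (impL B \<Gamma> \<Delta> A) then show ?case using derivable.impL[of X cf B "\<Gamma> + \<Gamma>'" "\<Delta> + \<Delta>'" A] by simp
next
  case (impR A \<Gamma> B \<Delta>) then show ?case using derivable.impR[of X cf A "\<Gamma> + \<Gamma>'" B "\<Delta> + \<Delta>'"] by simp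
next
  case (refl B \<Gamma> \<Delta>) then show ?case using derivable.refl[of X cf B "\<Gamma> + \<Gamma>'" "\<Delta> + \<Delta>'"] by simp
next
  case (box \<Gamma> \<Pi> A \<Delta> b) then show ?case
    using derivable.box[of X cf "\<Gamma> + \<Gamma>'" \<Pi> A "\<Delta> + \<Delta>'" b] by (simp add: ac_simps)
next
  case (cut \<Gamma> A \<Delta>) then show ?case using derivable.cut[of cf X "\<Gamma> + \<Gamma>'" A "\<Delta> + \<Delta>'"] by simp
qed

lemma add_mset_eq_plus_image_FBox:
  assumes "add_mset F \<Gamma> = \<Gamma>' + image_mset FBox \<Pi>" and "\<And>A. F \<noteq> FBox A"
  obtains K where "\<Gamma>' = add_mset F K" "\<Gamma> = K + image_mset FBox \<Pi>"
proof -
  have "F \<in># \<Gamma>'" using assms by (metis image_iff multiset.set_map union_iff union_single_eq_member)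
  then obtain K where "\<Gamma>' = add_mset F K" by (metis multi_member_split)
  with assms(1) show thesis using that by simp
qed

lemma derivable_ImpL_inv_left_prem:
  "derivable X cf (add_mset (FImp A B) \<Gamma>, \<Delta>) \<Longrightarrow> derivable X cf (add_mset B \<Gamma>, \<Delta>)"
proof (induction "(add_mset (FImp A B) \<Gamma>, \<Delta>)" arbitrary: \<Gamma> \<Delta> rule: derivable.induct)
  case (ax q \<Delta>) then show ?case by (auto intro: derivable.ax)
next
  case botL then show ?case by (auto intro: derivable.botL)
next
  case (impL B' \<Gamma>' \<Delta> A')
  show ?case
  proof (cases rule: mset_add_eq_cases[OF impL.hyps(5)])
    case 1 then show ?thesis using impL.hyps(1) by simp
  next
    case (2 K)
    then show ?thesis
      using impL.hyps(2)[of "add_mset B' K"] impL.hyps(4)[of K]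
        derivable.impL[of X cf B' "add_mset B K" \<Delta> A']
      by (simp add: add_mset_commute)
  qed
next
  case (impR A' B' \<Delta>) then show ?case
    using derivable.impR[of X cf A' "add_mset B \<Gamma>" B' \<Delta>] by (simp add: add_mset_commute)
next
  case (refl B' \<Gamma>' \<Delta>)
  obtain K where K: "\<Gamma>' = add_mset (FImp A B) K" "\<Gamma> = add_mset (FBox B') K"
    using mset_add_eq_cases[OF refl.hyps(3)] by blast
  then show ?case using refl.hyps(2)[of "add_mset B' (add_mset (FBox B') K)"]
      derivable.refl[of X cf B' "add_mset B K" \<Delta>]
    by (simp add: add_mset_commute)
next
  case (box \<Gamma>' \<Pi> A' \<Delta> b)
  obtain K where K: "\<Gamma>' = add_mset (FImp A B) K" "\<Gamma> = K + image_mset FBox \<Pi>"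
    using add_mset_eq_plus_image_FBox[OF box.hyps(4)[symmetric]] by blast
  then show ?case using box.hyps(2)[of "K + image_mset FBox \<Pi>"] box.hyps(3)
      derivable.box[of X cf "add_mset B K" \<Pi> A' \<Delta> b]
    by simp
next
  case (cut A' \<Delta>) then show ?case
    using derivable.cut[of cf X "add_mset B \<Gamma>" A' \<Delta>] by (simp add: add_mset_commute)
qed

lemma derivable_ImpL_inv_right_prem:
  "derivable X cf (add_mset (FImp A B) \<Gamma>, \<Delta>) \<Longrightarrow> derivable X cf (\<Gamma>, add_mset A \<Delta>)"
proof (induction "(add_mset (FImp A B) \<Gamma>, \<Delta>)" arbitrary: \<Gamma> \<Delta> rule: derivable.induct)
  case (ax q \<Delta>) then show ?case by (auto intro: derivable.ax)
next
  case botL then show ?case by (auto intro: derivable.botL)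
next
  case (impL B' \<Gamma>' \<Delta> A')
  show ?case
  proof (cases rule: mset_add_eq_cases[OF impL.hyps(5)])
    case 1 then show ?thesis using impL.hyps(3) by simp
  next
    case (2 K)
    then show ?thesis
      using impL.hyps(2)[of "add_mset B' K"] impL.hyps(4)[of K]
        derivable.impL[of X cf B' K "add_mset A \<Delta>" A']
      by (simp add: add_mset_commute)
  qed
next
  case (impR A' B' \<Delta>) then show ?case
    using derivable.impR[of X cf A' \<Gamma> B' "add_mset A \<Delta>"] by (simp add: add_mset_commute)
next
  case (refl B' \<Gamma>' \<Delta>)
  obtain K where K: "\<Gamma>' = add_mset (FImp A B) K" "\<Gamma> = add_mset (FBox B') K"
    using mset_add_eq_cases[OF refl.hyps(3)] by blast
  then show ?case using refl.hyps(2)[of "add_mset B' (add_mset (FBox B') K)"]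
      derivable.refl[of X cf B' K "add_mset A \<Delta>"]
    by (simp add: add_mset_commute)
next
  case (box \<Gamma>' \<Pi> A' \<Delta> b)
  obtain K where K: "\<Gamma>' = add_mset (FImp A B) K" "\<Gamma> = K + image_mset FBox \<Pi>"
    using add_mset_eq_plus_image_FBox[OF box.hyps(4)[symmetric]] by blast
  then show ?case using box.hyps(2)[of "K + image_mset FBox \<Pi>"] box.hyps(3)
      derivable.box[of X cf K \<Pi> A' "add_mset A \<Delta>" b]
    by (simp add: add_mset_commute)
next
  case (cut A' \<Delta>) then show ?case
    using derivable.cut[of cf X \<Gamma> A' "add_mset A \<Delta>"] by (simp add: add_mset_commute)
qed

lemma derivable_ImpR_inv:
  "derivable X cf (\<Gamma>, add_mset (FImp A B) \<Delta>) \<Longrightarrow> derivable X cf (add_mset A \<Gamma>, add_mset B \<Delta>)"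
proof (induction "(\<Gamma>, add_mset (FImp A B) \<Delta>)" arbitrary: \<Gamma> \<Delta> rule: derivable.induct)
  case (ax q \<Gamma> \<Delta>')
  then show ?case by (auto intro: derivable.ax)
next
  case (botL \<Gamma>)
  then show ?case by (auto intro: derivable.botL)
next
  case (impL B' \<Gamma> A' \<Delta>)
  then show ?case
    using derivable.impL[of X cf B' "add_mset A \<Gamma>" "add_mset B \<Delta>" A']
    by (simp add: add_mset_commute)
next
  case (impR A' \<Gamma> B' \<Delta>' \<Delta>)
  show ?case
  proof (cases rule: mset_add_eq_cases[OF impR.hyps(3)])
    case 1 then show ?thesis using impR.hyps(1) by simp
  next
    case (2 K)
    then show ?thesis
      using impR.hyps(2)[of "add_mset B' K"] derivable.impR[of X cf A' "add_mset A \<Gamma>" B' "add_mset B K"]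
      by (simp add: add_mset_commute)
  qed
next
  case (refl B' \<Gamma> \<Delta>)
  then show ?case
    using derivable.refl[of X cf B' "add_mset A \<Gamma>" "add_mset B \<Delta>"] by (simp add: add_mset_commute)
next
  case (box \<Gamma> \<Pi> A' \<Delta>' b \<Delta>)
  obtain K where K: "\<Delta>' = add_mset (FImp A B) K" "\<Delta> = add_mset (FBox A') K"
    using mset_add_eq_cases[OF box.hyps(4)] by blast
  then show ?case
    using box.hyps(2)[of "add_mset A' K"] box.hyps(3)
      derivable.box[of X cf "add_mset A \<Gamma>" \<Pi> A' "add_mset B K" b]
    by (simp add: add_mset_commute)
next
  case (cut \<Gamma> A' \<Delta>)
  then show ?case
    using cut.hyps(3)[of "add_mset A' \<Delta>"] derivable.cut[of cf X "add_mset A \<Gamma>" A' "add_mset B \<Delta>"]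
    by (simp add: add_mset_commute)
qed

lemma derivable_Box_inv:
  "derivable X cf (\<Gamma>, add_mset (FBox A) \<Delta>) \<Longrightarrow> derivable X cf (\<Gamma>, add_mset A \<Delta>)"
proof (induction "(\<Gamma>, add_mset (FBox A) \<Delta>)" arbitrary: \<Gamma> \<Delta> rule: derivable.induct)
  case (ax q \<Gamma>) then show ?case by (auto intro: derivable.ax)
next
  case botL then show ?case by (auto intro: derivable.botL)
next
  case (impL B' \<Gamma> A' \<Delta>) then show ?case
    using impL.hyps(4)[of "add_mset A' \<Delta>"] derivable.impL[of X cf B' \<Gamma> "add_mset A \<Delta>" A']
    by (simp add: add_mset_commute)
next
  case (impR A' \<Gamma> B' \<Delta>' \<Delta>)
  obtain K where K: "\<Delta>' = add_mset (FBox A) K" "\<Delta> = add_mset (FImp A' B') K"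
    using mset_add_eq_cases[OF impR.hyps(3)] by blast
  then show ?case using impR.hyps(2)[of "add_mset B' K"] derivable.impR[of X cf A' \<Gamma> B' "add_mset A K"]
    by (simp add: add_mset_commute)
next
  case (refl B' \<Gamma> \<Delta>) then show ?case
    using derivable.refl[of X cf B' \<Gamma> "add_mset A \<Delta>"] by simp
next
  case (box \<Gamma> \<Pi> A' \<Delta>' b \<Delta>)
  show ?case
  proof (cases rule: mset_add_eq_cases[OF box.hyps(4)])
    case 1 then show ?thesis using box.hyps(1) by simp
  next
    case (2 K)
    then show ?thesis using box.hyps(2)[of "add_mset A' K"] box.hyps(3)
        derivable.box[of X cf \<Gamma> \<Pi> A' "add_mset A K" b]
      by (simp add: add_mset_commute)
  qed
next
  case (cut \<Gamma> A' \<Delta>) then show ?case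
    using cut.hyps(3)[of "add_mset A' \<Delta>"] derivable.cut[of cf X \<Gamma> A' "add_mset A \<Delta>"]
    by (simp add: add_mset_commute)
qed

lemma add_mset_eq_add_mset_twice:
  assumes "add_mset x M = add_mset a (add_mset a N)" "x \<noteq> a"
  obtains K where "M = add_mset a (add_mset a K)" "N = add_mset x K"
proof -
  have "x \<in># add_mset a (add_mset a N)" using assms(1) by (metis union_single_eq_member)
  then have "x \<in># N" using assms(2) by simp
  then obtain K where "N = add_mset x K" by (metis multi_member_split)
  with assms that show thesis by (simp add: add_mset_commute)
qed

lemma derivable_contract_At:
  "derivable X cf (\<Gamma>, add_mset (FAt q) (add_mset (FAt q) \<Delta>)) \<Longrightarrow>
   derivable X cf (\<Gamma>, add_mset (FAt q) \<Delta>)"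
proof (induction "(\<Gamma>, add_mset (FAt q) (add_mset (FAt q) \<Delta>))" arbitrary: \<Gamma> \<Delta> rule: derivable.induct)
  case (ax r \<Gamma>) then show ?case by (auto intro: derivable.ax)
next
  case botL then show ?case by (auto intro: derivable.botL)
next
  case (impL B' \<Gamma> A' \<Delta>) then show ?case
    using impL.hyps(4)[of "add_mset A' \<Delta>"] derivable.impL[of X cf B' \<Gamma> "add_mset (FAt q) \<Delta>" A']
    by (simp add: add_mset_commute)
next
  case (impR A' \<Gamma> B' \<Delta>' \<Delta>)
  obtain K where K: "\<Delta>' = add_mset (FAt q) (add_mset (FAt q) K)" "\<Delta> = add_mset (FImp A' B') K"
    using add_mset_eq_add_mset_twice[OF impR.hyps(3)] by blast
  then show ?case
    using impR.hyps(2)[of "add_mset B' K"] derivable.impR[of X cf A' \<Gamma> B' "add_mset (FAt q) K"]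
    by (simp add: add_mset_commute)
next
  case (refl B' \<Gamma> \<Delta>) then show ?case
    using derivable.refl[of X cf B' \<Gamma> "add_mset (FAt q) \<Delta>"] by simp
next
  case (box \<Gamma> \<Pi> A' \<Delta>' b \<Delta>)
  obtain K where K: "\<Delta>' = add_mset (FAt q) (add_mset (FAt q) K)" "\<Delta> = add_mset (FBox A') K"
    using add_mset_eq_add_mset_twice[OF box.hyps(4)] by blast
  then show ?case using box.hyps(2)[of "add_mset A' K"] box.hyps(3)
      derivable.box[of X cf \<Gamma> \<Pi> A' "add_mset (FAt q) K" b]
    by (simp add: add_mset_commute)
next
  case (cut \<Gamma> A' \<Delta>) then show ?case
    using cut.hyps(3)[of "add_mset A' \<Delta>"] derivable.cut[of cf X \<Gamma> A' "add_mset (FAt q) \<Delta>"]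
    by (simp add: add_mset_commute)
qed

lemma derivable_cut_At:
  "derivable X cf (add_mset (FAt p) \<Gamma>, \<Delta>) \<Longrightarrow> derivable X cf (\<Gamma>, add_mset (FAt p) \<Delta>) \<Longrightarrow>
   derivable X cf (\<Gamma>, \<Delta>)"
proof (induction "(add_mset (FAt p) \<Gamma>, \<Delta>)" arbitrary: \<Gamma> \<Delta> rule: derivable.induct)
  case (ax q \<Delta> \<Gamma>)
  show ?case
  proof (cases "FAt q \<in># \<Gamma>")
    case True then show ?thesis using ax.hyps(2) by (rule derivable.ax)
  next
    case False
    then have "q = p" using ax.hyps(1) by simp
    with ax.hyps(2) obtain K where "\<Delta> = add_mset (FAt p) K" by (metis multi_member_split)
    then show ?thesis using ax.prems derivable_contract_At by fastforce
  qed
next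
  case botL then show ?case by (auto intro: derivable.botL)
next
  case (impL B \<Gamma>' \<Delta> A \<Gamma>)
  obtain K where K: "\<Gamma>' = add_mset (FAt p) K" "\<Gamma> = add_mset (FImp A B) K"
    using mset_add_eq_cases[OF impL.hyps(5)] by blast
  have "derivable X cf (add_mset B K, \<Delta>)"
    using impL.hyps(2)[of "add_mset B K"] derivable_ImpL_inv_left_prem[of X cf A B K] impL.prems K
    by (simp add: add_mset_commute)
  moreover have "derivable X cf (K, add_mset A \<Delta>)"
    using impL.hyps(4)[of K] derivable_ImpL_inv_right_prem[of X cf A B K] impL.prems K
    by (simp add: add_mset_commute)
  ultimately show ?case using K derivable.impL by simp
next
  case (impR A B \<Delta> \<Gamma>)
  have "derivable X cf (add_mset A \<Gamma>, add_mset B \<Delta>)"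
    using impR.hyps(2)[of "add_mset A \<Gamma>"] impR.prems derivable_ImpR_inv[of X cf \<Gamma> A B "add_mset (FAt p) \<Delta>"]
    by (simp add: add_mset_commute)
  then show ?case by (rule derivable.impR)
next
  case (refl B \<Gamma>' \<Delta> \<Gamma>)
  obtain K where K: "\<Gamma>' = add_mset (FAt p) K" "\<Gamma> = add_mset (FBox B) K"
    using mset_add_eq_cases[OF refl.hyps(3)] by blast
  have "derivable X cf (add_mset B (add_mset (FBox B) K), \<Delta>)"
    using refl.hyps(2)[of "add_mset B (add_mset (FBox B) K)"] refl.prems K
      derivable_weaken[of X cf \<Gamma> "add_mset (FAt p) \<Delta>" "{#B#}" "{#}"]
    by (simp add: add_mset_commute)
  then show ?case using K derivable.refl by simp
next
  case (box \<Gamma>' \<Pi> A \<Delta> b \<Gamma>)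
  obtain K where K: "\<Gamma>' = add_mset (FAt p) K" "\<Gamma> = K + image_mset FBox \<Pi>"
    using add_mset_eq_plus_image_FBox[OF box.hyps(4)[symmetric]] by blast
  have "derivable X cf (K + image_mset FBox \<Pi>, add_mset A \<Delta>)"
    using box.hyps(2)[of "K + image_mset FBox \<Pi>"] box.prems K
      derivable_Box_inv[of X cf \<Gamma> A "add_mset (FAt p) \<Delta>"]
    by (simp add: add_mset_commute)
  then show ?case using K derivable.box[OF _ box.hyps(3)] by simp
next
  case (cut A \<Delta> \<Gamma>)
  have "derivable X cf (\<Gamma>, add_mset A \<Delta>)"
    using cut.hyps(3)[of \<Gamma>] cut.prems derivable_weaken[of X cf \<Gamma> "add_mset (FAt p) \<Delta>" "{#}" "{#A#}"]
    by (simp add: add_mset_commute)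
  moreover have "derivable X cf (add_mset A \<Gamma>, \<Delta>)"
    using cut.hyps(5)[of "add_mset A \<Gamma>"] cut.prems derivable_weaken[of X cf \<Gamma> "add_mset (FAt p) \<Delta>" "{#A#}" "{#}"]
    by (simp add: add_mset_commute)
  ultimately show ?case using derivable.cut[OF cut.hyps(1)] by blast
qed

section \<open>Proof trees, fragments and cut-freeness\<close>

definition node :: "'a seq \<Rightarrow> rl \<Rightarrow> 'a ptree list \<Rightarrow> 'a ptree" where
  "node S r ts = (\<lambda>xs. case xs of [] \<Rightarrow> Some (S, r) | i # ys \<Rightarrow> if i < length ts then (ts ! i) ys else None)"

definition child :: "'a ptree \<Rightarrow> nat \<Rightarrow> 'a ptree" where
  "child T i = (\<lambda>ys. T (i # ys))"

definition subtree :: "'a ptree \<Rightarrow> nat list \<Rightarrow> 'a ptree" where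
  "subtree T xs = (\<lambda>ys. T (xs @ ys))"

lemma node_Nil [simp]: "node S r ts [] = Some (S, r)"
  by (simp add: node_def)

lemma node_Cons [simp]: "node S r ts (i # ys) = (if i < length ts then (ts ! i) ys else None)"
  by (simp add: node_def)

lemma seq_at_node_Nil [simp]: "seq_at (node S r ts) [] = S"
  and rule_at_node_Nil [simp]: "rule_at (node S r ts) [] = r"
  and concl_node [simp]: "concl (node S r ts) = S"
  by (simp_all add: seq_at_def rule_at_def concl_def)

lemma seq_at_node_Cons [simp]: "i < length ts \<Longrightarrow> seq_at (node S r ts) (i # ys) = seq_at (ts ! i) ys"
  and rule_at_node_Cons [simp]: "i < length ts \<Longrightarrow> rule_at (node S r ts) (i # ys) = rule_at (ts ! i) ys"
  by (simp_all add: seq_at_def rule_at_def)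

lemma child_apply [simp]: "child T i ys = T (i # ys)"
  by (simp add: child_def)

lemma seq_at_child [simp]: "seq_at (child T i) ys = seq_at T (i # ys)"
  and rule_at_child [simp]: "rule_at (child T i) ys = rule_at T (i # ys)"
  by (simp_all add: seq_at_def rule_at_def)

lemma concl_child: "concl (child T i) = seq_at T [i]"
  by (simp add: concl_def)

lemma subtree_Nil [simp]: "subtree T [] = T"
  and subtree_Cons: "subtree T (i # xs) = subtree (child T i) xs"
  by (simp_all add: subtree_def child_def)

lemma wf_tree_None_append: "wf_tree T \<Longrightarrow> T xs = None \<Longrightarrow> T (xs @ ys) = None"
proof (induction ys rule: rev_induct)
  case (snoc y ys)
  then show ?case unfolding wf_tree_def by (metis append_assoc)
qed simp

lemma wf_tree_eq_node:
  assumes "wf_tree T"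
  shows "T = node (seq_at T []) (rule_at T []) (map (child T) [0..<arity (rule_at T [])])"
proof
  fix xs
  show "T xs = node (seq_at T []) (rule_at T []) (map (child T) [0..<arity (rule_at T [])]) xs"
  proof (cases xs)
    case Nil then show ?thesis using assms by (auto simp: wf_tree_def seq_at_def rule_at_def)
  next
    case (Cons i ys)
    have "T [i] = None" if "\<not> i < arity (rule_at T [])"
      using assms that unfolding wf_tree_def by (metis append_Nil)
    then show ?thesis using Cons wf_tree_None_append[OF assms, of "[i]" ys] by auto
  qed
qed

lemma wf_tree_node:
  assumes "length ts = arity r" and "\<forall>t\<in>set ts. wf_tree t"
  shows "wf_tree (node S r ts)"
  unfolding wf_tree_def
proof (intro conjI allI)
  fix xs i
  show "(node S r ts (xs @ [i]) \<noteq> None) = (node S r ts xs \<noteq> None \<and> i < arity (rule_at (node S r ts) xs))"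
    using assms by (cases xs) (auto simp: wf_tree_def nth_mem)
qed simp

lemma wf_tree_child:
  assumes "wf_tree T" and "i < arity (rule_at T [])"
  shows "wf_tree (child T i)"
proof -
  have "T ([] @ [i]) \<noteq> None"
    and "T ((i # xs) @ [j]) \<noteq> None \<longleftrightarrow> T (i # xs) \<noteq> None \<and> j < arity (rule_at T (i # xs))" for xs j
    using assms unfolding wf_tree_def by blast+
  then show ?thesis unfolding wf_tree_def by simp
qed

lemma local_ok_child: "local_ok (child T i) ys = local_ok T (i # ys)"
  and local_ok_node_Cons: "i < length ts \<Longrightarrow> local_ok (node S r ts) (i # ys) = local_ok (ts ! i) ys"
  by (simp_all add: local_ok_def)

lemma right_box_prem_node_single: "right_box_prem (node S r ts) [i] \<longleftrightarrow> i = 1 \<and> r = RBox"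
  and right_box_prem_node_Cons:
    "i < length ts \<Longrightarrow> ys \<noteq> [] \<Longrightarrow> right_box_prem (node S r ts) (i # ys) = right_box_prem (ts ! i) ys"
  and right_box_prem_child: "ys \<noteq> [] \<Longrightarrow> right_box_prem (child T i) ys = right_box_prem T (i # ys)"
  by (simp_all add: right_box_prem_def)

lemma child_node: "i < length ts \<Longrightarrow> child (node S r ts) i = ts ! i"
  by (auto simp: child_def)

lemma infinite_right_box_prems_child:
  "infinite {k. right_box_prem T (map (case_nat i g) [0..<Suc k])} \<longleftrightarrow>
   infinite {k. right_box_prem (child T i) (map g [0..<Suc k])}"
proof -
  have e: "map (case_nat i g) [0..<Suc k] = i # map g [0..<k]" for k
    using map_upt_Suc[of "case_nat i g"] by simp
  let ?A = "{k. right_box_prem T (map (case_nat i g) [0..<Suc k])}"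
    and ?B = "{k. right_box_prem (child T i) (map g [0..<Suc k])}"
  have "?A - {0} = Suc ` ?B"
  proof (rule set_eqI)
    fix k
    show "k \<in> ?A - {0} \<longleftrightarrow> k \<in> Suc ` ?B"
    proof (cases k)
      case (Suc j)
      have "right_box_prem T (i # map g [0..<Suc j]) = right_box_prem (child T i) (map g [0..<Suc j])"
        by (simp add: right_box_prem_child del: upt_Suc)
      then show ?thesis using Suc by (simp only: e) blast
    qed simp
  qed
  moreover have "finite (?A - {0}) \<longleftrightarrow> finite ?A" by simp
  moreover have "finite (Suc ` ?B) \<longleftrightarrow> finite ?B" by (simp add: finite_image_iff)
  ultimately show ?thesis by simp
qed

lemma is_inf_proof_node:
  assumes l: "length ts = arity r" and c: "\<forall>t\<in>set ts. is_inf_proof t"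
    and lo: "local_ok (node S r ts) []"
  shows "is_inf_proof (node S r ts)"
  unfolding is_inf_proof_def
proof (intro conjI allI impI)
  show "wf_tree (node S r ts)" using wf_tree_node[OF l] c unfolding is_inf_proof_def by blast
next
  fix xs assume "node S r ts xs \<noteq> None"
  then show "local_ok (node S r ts) xs"
  proof (cases xs)
    case (Cons i ys)
    with \<open>node S r ts xs \<noteq> None\<close> have i: "i < length ts" and "(ts ! i) ys \<noteq> None"
      by (simp_all split: if_splits)
    moreover have "is_inf_proof (ts ! i)" using c i by simp
    ultimately show ?thesis using Cons local_ok_node_Cons[OF i] unfolding is_inf_proof_def by blast
  qed (use lo in simp)
next
  fix f :: "nat \<Rightarrow> nat"
  assume a: "\<forall>k. node S r ts (map f [0..<k]) \<noteq> None"
  define g where "g = (\<lambda>j. f (Suc j))"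
  have f: "f = case_nat (f 0) g" by (auto simp: g_def split: nat.split)
  have i: "f 0 < length ts" using a[rule_format, of 1] by (auto split: if_splits)
  have "(ts ! f 0) (map g [0..<k]) \<noteq> None" for k
    using a[rule_format, of "Suc k"] i by (simp add: map_upt_Suc g_def del: upt_Suc)
  then have "infinite {k. right_box_prem (ts ! f 0) (map g [0..<Suc k])}"
    using c i unfolding is_inf_proof_def by (meson nth_mem)
  then show "infinite {k. right_box_prem (node S r ts) (map f [0..<Suc k])}"
    using infinite_right_box_prems_child[of "node S r ts" "f 0" g] child_node[OF i] f by simp
qed

lemma is_inf_proof_child:
  assumes T: "is_inf_proof T" and i: "i < arity (rule_at T [])"
  shows "is_inf_proof (child T i)"
  unfolding is_inf_proof_def
proof (intro conjI allI impI)
  show "wf_tree (child T i)" using T i wf_tree_child is_inf_proof_def by blast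
next
  fix xs assume "child T i xs \<noteq> None"
  then show "local_ok (child T i) xs" using T by (simp add: local_ok_child is_inf_proof_def)
next
  fix g :: "nat \<Rightarrow> nat"
  assume a: "\<forall>k. child T i (map g [0..<k]) \<noteq> None"
  have "T (map (case_nat i g) [0..<k]) \<noteq> None" for k
    using a T by (cases k) (auto simp: map_upt_Suc is_inf_proof_def wf_tree_def simp del: upt_Suc)
  then have "infinite {k. right_box_prem T (map (case_nat i g) [0..<Suc k])}"
    using T unfolding is_inf_proof_def by blast
  then show "infinite {k. right_box_prem (child T i) (map g [0..<Suc k])}"
    using infinite_right_box_prems_child by blast
qed

lemma is_inf_proof_root:
  assumes "is_inf_proof T" and "T [] = Some (S, r)"
  shows "local_ok T []" and "seq_at T [] = S" and "rule_at T [] = r" and "concl T = S"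
    and "i < arity r \<Longrightarrow> is_inf_proof (child T i)"
  using assms is_inf_proof_child[OF assms(1)]
  by (auto simp: is_inf_proof_def seq_at_def rule_at_def concl_def)

definition box_step :: "rl \<Rightarrow> nat \<Rightarrow> nat" where
  "box_step r i = (if i = 1 \<and> r = RBox then 1 else 0)"

lemma box_count_Nil [simp]: "box_count T [] = 0"
  by (simp add: box_count_def)

lemma box_count_node_Cons:
  assumes i: "i < length ts"
  shows "box_count (node S r ts) (i # ys) = box_count (ts ! i) ys + box_step r i"
proof -
  let ?A = "{k. 1 \<le> k \<and> k \<le> length ys \<and> right_box_prem (ts ! i) (take k ys)}"
  have rb: "zs \<noteq> [] \<Longrightarrow> right_box_prem (node S r ts) (i # zs) = right_box_prem (ts ! i) zs" for zs
    by (rule right_box_prem_node_Cons[OF i])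
  have L: "{k. 1 \<le> k \<and> k \<le> length (i # ys) \<and> right_box_prem (node S r ts) (take k (i # ys))}
       = (if i = 1 \<and> r = RBox then {1} else {}) \<union> Suc ` ?A" (is "?L = ?R")
  proof (rule set_eqI)
    fix k
    show "k \<in> ?L \<longleftrightarrow> k \<in> ?R"
    proof (cases k)
      case (Suc j)
      show ?thesis
      proof (cases j)
        case (Suc j')
        then have "j \<le> length ys \<Longrightarrow> take j ys \<noteq> []" by (cases ys) auto
        then show ?thesis
          using \<open>k = Suc j\<close> Suc rb by (auto simp: image_iff)
      qed (use Suc in \<open>auto simp: right_box_prem_node_single\<close>)
    qed simp
  qed
  have "finite ?A" by (rule finite_subset[of _ "{..length ys}"]) auto
  then have "card ?R = box_step r i + card ?A"
    by (subst card_Un_disjoint) (auto simp: box_step_def card_image)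
  then show ?thesis unfolding box_count_def L by simp
qed

lemma fragment_root: "T [] \<noteq> None \<Longrightarrow>
    fragment n T [] = Some (seq_at T [], if 0 < n then Some (rule_at T []) else None)"
  by (simp add: fragment_def)

lemma fragment_zero: "fragment 0 T xs = (if xs = [] \<and> T [] \<noteq> None then Some (seq_at T [], None) else None)"
  unfolding fragment_def by (cases xs) auto

lemma fragment_node_Cons:
  assumes n: "0 < n"
  shows "fragment n (node S r ts) (i # ys) =
    (if i < length ts then fragment (n - box_step r i) (ts ! i) ys else None)"
proof (cases "i < length ts")
  case True
  have bc: "box_count (node S r ts) (i # zs) = box_count (ts ! i) zs + box_step r i" for zs
    using box_count_node_Cons[OF True] .
  have "box_step r i \<le> 1" by (simp add: box_step_def)
  then have "(\<forall>k<length (i # ys). box_count (node S r ts) (take k (i # ys)) < n) \<longleftrightarrow>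
            (\<forall>k<length ys. box_count (ts ! i) (take k ys) < n - box_step r i)"
    and "box_count (node S r ts) (i # ys) < n \<longleftrightarrow> box_count (ts ! i) ys < n - box_step r i"
    using n by (auto simp: All_less_Suc2 bc less_diff_conv)
  then show ?thesis unfolding fragment_def using True by simp
qed (simp add: fragment_def)

lemma fragment_child:
  assumes "wf_tree T" and "0 < n"
  shows "fragment n T (i # ys) = (if i < arity (rule_at T [])
    then fragment (n - box_step (rule_at T []) i) (child T i) ys else None)"
  by (subst wf_tree_eq_node[OF assms(1)]) (simp add: fragment_node_Cons[OF assms(2)])

lemma fragment_eq_imp_root_eq:
  assumes "wf_tree T" "wf_tree T'" "0 < n" "fragment n T = fragment n T'"
  shows "T' [] = T []"
  using fragment_root[of T n] fragment_root[of T' n] assms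
  by (auto simp: wf_tree_def seq_at_def rule_at_def)

lemma concl_fragment_eq:
  assumes "is_inf_proof T" "is_inf_proof T'" "0 < n" "fragment n T = fragment n T'"
  shows "concl T' = concl T"
proof -
  have "wf_tree T" "wf_tree T'" using assms(1,2) by (simp_all add: is_inf_proof_def)
  then have "T' [] = T []" using fragment_eq_imp_root_eq assms(3,4) by blast
  then show ?thesis by (simp add: concl_def seq_at_def)
qed

lemma fragment_node_eq:
  assumes "0 < n" and "length ts = length ts'"
    and "\<forall>i<length ts. fragment (n - box_step r i) (ts ! i) = fragment (n - box_step r i) (ts' ! i)"
  shows "fragment n (node S r ts) = fragment n (node S r ts')"
proof
  show "fragment n (node S r ts) xs = fragment n (node S r ts') xs" for xs
    using assms by (cases xs) (auto simp: fragment_root fragment_node_Cons)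
qed

lemma fragment_eq_root_child:
  assumes "wf_tree T" "wf_tree T'" "0 < n" "fragment n T = fragment n T'"
    and "T [] = Some (S, r)" and "i < arity r"
  shows "T' [] = Some (S, r)" and "wf_tree (child T i)" and "wf_tree (child T' i)"
    and "fragment (n - box_step r i) (child T i) = fragment (n - box_step r i) (child T' i)"
proof -
  have r: "rule_at T [] = r" "rule_at T' [] = r"
    using fragment_eq_imp_root_eq[OF assms(1-4)] assms(5) by (simp_all add: rule_at_def)
  show "T' [] = Some (S, r)" using fragment_eq_imp_root_eq[OF assms(1-4)] assms(5) by simp
  show "wf_tree (child T i)" "wf_tree (child T' i)"
    using wf_tree_child assms(1,2,6) r by metis+
  show "fragment (n - box_step r i) (child T i) = fragment (n - box_step r i) (child T' i)"
  proof
    show "fragment (n - box_step r i) (child T i) ys = fragment (n - box_step r i) (child T' i) ys" for ys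
      using fragment_child[OF assms(1,3), of i ys] fragment_child[OF assms(2,3), of i ys] assms(4,6) r by simp
  qed
qed

definition cut_free_upto :: "nat \<Rightarrow> 'a ptree \<Rightarrow> bool" where
  "cut_free_upto n T \<longleftrightarrow> (\<forall>xs s. fragment n T xs \<noteq> Some (s, Some RCut))"

lemma PPn_eq: "PPn n = {T \<in> PP. cut_free_upto n T}"
  unfolding PPn_def cut_free_upto_def fragment_def by (auto split: if_splits)

lemma cut_free_upto_0 [simp]: "cut_free_upto 0 T"
  by (simp add: cut_free_upto_def fragment_zero)

lemma cut_free_upto_node:
  assumes n: "0 < n"
  shows "cut_free_upto n (node S r ts) \<longleftrightarrow>
    r \<noteq> RCut \<and> (\<forall>i<length ts. cut_free_upto (n - box_step r i) (ts ! i))"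
proof -
  have "cut_free_upto n (node S r ts) \<longleftrightarrow>
      (\<forall>s. fragment n (node S r ts) [] \<noteq> Some (s, Some RCut)) \<and>
      (\<forall>i ys s. fragment n (node S r ts) (i # ys) \<noteq> Some (s, Some RCut))"
    unfolding cut_free_upto_def by (metis list.exhaust)
  then show ?thesis
    using n by (auto simp: fragment_root fragment_node_Cons cut_free_upto_def)
qed

lemma cut_free_upto_wf_tree:
  assumes "wf_tree T" and "0 < n"
  shows "cut_free_upto n T \<longleftrightarrow> rule_at T [] \<noteq> RCut \<and>
    (\<forall>i<arity (rule_at T []). cut_free_upto (n - box_step (rule_at T []) i) (child T i))"
  by (subst wf_tree_eq_node[OF assms(1)]) (simp add: cut_free_upto_node[OF assms(2)])

lemma cut_free_upto_root_child:
  assumes "wf_tree T" "0 < n" "cut_free_upto n T" and "T [] = Some (S, r)"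
  shows "r \<noteq> RCut"
    and "i < arity r \<Longrightarrow> wf_tree (child T i) \<and> cut_free_upto (n - box_step r i) (child T i)"
proof -
  have "rule_at T [] = r" using assms(4) by (simp add: rule_at_def)
  then show "r \<noteq> RCut" "i < arity r \<Longrightarrow> wf_tree (child T i) \<and> cut_free_upto (n - box_step r i) (child T i)"
    using assms(3) cut_free_upto_wf_tree[OF assms(1,2)] wf_tree_child[OF assms(1)] by auto
qed

section \<open>Local derivations\<close>

text \<open>Finite derivations whose right premises of \<open>(\<box>)\<close> are open leaves: in
  \<open>LBox S d S' b\<close> the right premise \<open>S'\<close> carries the tag \<open>b\<close>.\<close>

datatype (dead 'a, 'b) lderiv =
    LAx (lconcl: "'a seq")
  | LBotL (lconcl: "'a seq")
  | LImpL (lconcl: "'a seq") "('a, 'b) lderiv" "('a, 'b) lderiv"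
  | LImpR (lconcl: "'a seq") "('a, 'b) lderiv"
  | LRefl (lconcl: "'a seq") "('a, 'b) lderiv"
  | LBox (lconcl: "'a seq") "('a, 'b) lderiv" "'a seq" 'b
  | LCut (lconcl: "'a seq") "('a, 'b) lderiv" "('a, 'b) lderiv"

primrec lvalid :: "('a, 'b) lderiv \<Rightarrow> bool" where
  "lvalid (LAx S) \<longleftrightarrow> (\<exists>p. FAt p \<in># fst S \<and> FAt p \<in># snd S)"
| "lvalid (LBotL S) \<longleftrightarrow> FBot \<in># fst S"
| "lvalid (LImpL S d0 d1) \<longleftrightarrow> lvalid d0 \<and> lvalid d1 \<and> (\<exists>\<Gamma> \<Delta> A B. S = (add_mset (FImp A B) \<Gamma>, \<Delta>) \<and>
     lconcl d0 = (add_mset B \<Gamma>, \<Delta>) \<and> lconcl d1 = (\<Gamma>, add_mset A \<Delta>))"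
| "lvalid (LImpR S d) \<longleftrightarrow> lvalid d \<and> (\<exists>\<Gamma> \<Delta> A B. S = (\<Gamma>, add_mset (FImp A B) \<Delta>) \<and>
     lconcl d = (add_mset A \<Gamma>, add_mset B \<Delta>))"
| "lvalid (LRefl S d) \<longleftrightarrow> lvalid d \<and> (\<exists>\<Gamma> \<Delta> B. S = (add_mset (FBox B) \<Gamma>, \<Delta>) \<and>
     lconcl d = (add_mset B (add_mset (FBox B) \<Gamma>), \<Delta>))"
| "lvalid (LBox S d S1 b) \<longleftrightarrow> lvalid d \<and> (\<exists>\<Gamma> \<Pi> \<Delta> A. S = (\<Gamma> + image_mset FBox \<Pi>, add_mset (FBox A) \<Delta>) \<and>
     lconcl d = (\<Gamma> + image_mset FBox \<Pi>, add_mset A \<Delta>) \<and> S1 = (image_mset FBox \<Pi>, {#A#}))"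
| "lvalid (LCut S d0 d1) \<longleftrightarrow> lvalid d0 \<and> lvalid d1 \<and>
     (\<exists>A. lconcl d0 = (fst S, add_mset A (snd S)) \<and> lconcl d1 = (add_mset A (fst S), snd S))"

primrec open_leaves :: "('a, 'b) lderiv \<Rightarrow> ('a seq \<times> 'b) set" where
  "open_leaves (LAx S) = {}"
| "open_leaves (LBotL S) = {}"
| "open_leaves (LImpL S d0 d1) = open_leaves d0 \<union> open_leaves d1"
| "open_leaves (LImpR S d) = open_leaves d"
| "open_leaves (LRefl S d) = open_leaves d"
| "open_leaves (LBox S d S1 b) = insert (S1, b) (open_leaves d)"
| "open_leaves (LCut S d0 d1) = open_leaves d0 \<union> open_leaves d1"

primrec lcut_free :: "('a, 'b) lderiv \<Rightarrow> bool" where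
  "lcut_free (LAx S) = True"
| "lcut_free (LBotL S) = True"
| "lcut_free (LImpL S d0 d1) \<longleftrightarrow> lcut_free d0 \<and> lcut_free d1"
| "lcut_free (LImpR S d) = lcut_free d"
| "lcut_free (LRefl S d) = lcut_free d"
| "lcut_free (LBox S d S1 b) = lcut_free d"
| "lcut_free (LCut S d0 d1) = False"

lemma lderiv_map_simps [simp]:
  "lconcl (map_lderiv f D) = lconcl D"
  "lvalid (map_lderiv f D) = lvalid D"
  "lcut_free (map_lderiv f D) = lcut_free D"
  "open_leaves (map_lderiv f D) = apsnd f ` open_leaves D"
  by (induct D) (auto simp: apsnd_def map_prod_def image_Un)

lemma derivable_mono: "derivable X cf S \<Longrightarrow> X \<subseteq> Y \<Longrightarrow> (cf' \<longrightarrow> cf) \<Longrightarrow> derivable Y cf' S"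
  by (induction rule: derivable.induct) (blast intro: derivable.intros)+

lemma lvalid_imp_derivable: "lvalid D \<Longrightarrow> derivable (open_leaves D) (lcut_free D) (lconcl D)"
proof (induction D)
  case (LAx S) then show ?case by (cases S) (auto intro: derivable.ax)
next
  case (LBotL S) then show ?case by (cases S) (auto intro: derivable.botL)
next
  case (LImpL S d0 d1)
  then show ?case by (auto intro!: derivable.impL elim!: derivable_mono)
next
  case (LImpR S d) then show ?case by (auto intro!: derivable.impR)
next
  case (LRefl S d) then show ?case by (auto intro!: derivable.refl)
next
  case (LBox S d S1 b) then show ?case by (auto intro!: derivable.box elim!: derivable_mono)
next
  case (LCut S d0 d1)
  then obtain A where "lconcl d0 = (fst S, add_mset A (snd S))" "lconcl d1 = (add_mset A (fst S), snd S)"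
    by auto
  moreover have "derivable (open_leaves d0 \<union> open_leaves d1) False (lconcl d0)"
    and "derivable (open_leaves d0 \<union> open_leaves d1) False (lconcl d1)"
    using LCut by (auto elim!: derivable_mono)
  ultimately show ?case
    using derivable.cut[of False "open_leaves d0 \<union> open_leaves d1" "fst S" A "snd S"] by simp
qed

lemma derivable_ex_lvalid:
  "derivable X cf S \<Longrightarrow> \<exists>D. lvalid D \<and> lconcl D = S \<and> open_leaves D \<subseteq> X \<and> (cf \<longrightarrow> lcut_free D)"
proof (induction rule: derivable.induct)
  case (ax q \<Gamma> \<Delta>) then show ?case by (intro exI[of _ "LAx (\<Gamma>, \<Delta>)"]) auto
next
  case (botL \<Gamma> \<Delta>) then show ?case by (intro exI[of _ "LBotL (\<Gamma>, \<Delta>)"]) auto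
next
  case (impL B \<Gamma> \<Delta> A)
  then obtain d0 d1 where "lvalid d0 \<and> lconcl d0 = (add_mset B \<Gamma>, \<Delta>) \<and> open_leaves d0 \<subseteq> X \<and> (cf \<longrightarrow> lcut_free d0)"
    "lvalid d1 \<and> lconcl d1 = (\<Gamma>, add_mset A \<Delta>) \<and> open_leaves d1 \<subseteq> X \<and> (cf \<longrightarrow> lcut_free d1)" by blast
  then show ?case by (intro exI[of _ "LImpL (add_mset (FImp A B) \<Gamma>, \<Delta>) d0 d1"]) auto
next
  case (impR A \<Gamma> B \<Delta>)
  then obtain d where "lvalid d \<and> lconcl d = (add_mset A \<Gamma>, add_mset B \<Delta>) \<and> open_leaves d \<subseteq> X \<and> (cf \<longrightarrow> lcut_free d)"
    by blast
  then show ?case by (intro exI[of _ "LImpR (\<Gamma>, add_mset (FImp A B) \<Delta>) d"]) auto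
next
  case (refl B \<Gamma> \<Delta>)
  then obtain d where "lvalid d \<and> lconcl d = (add_mset B (add_mset (FBox B) \<Gamma>), \<Delta>) \<and> open_leaves d \<subseteq> X \<and>
      (cf \<longrightarrow> lcut_free d)" by blast
  then show ?case by (intro exI[of _ "LRefl (add_mset (FBox B) \<Gamma>, \<Delta>) d"]) auto
next
  case (box \<Gamma> \<Pi> A \<Delta> b)
  then obtain d where "lvalid d \<and> lconcl d = (\<Gamma> + image_mset FBox \<Pi>, add_mset A \<Delta>) \<and> open_leaves d \<subseteq> X \<and>
      (cf \<longrightarrow> lcut_free d)" by blast
  then show ?case using box.hyps
    by (intro exI[of _ "LBox (\<Gamma> + image_mset FBox \<Pi>, add_mset (FBox A) \<Delta>) d (image_mset FBox \<Pi>, {#A#}) b"]) auto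
next
  case (cut \<Gamma> A \<Delta>)
  then obtain d0 d1 where "lvalid d0 \<and> lconcl d0 = (\<Gamma>, add_mset A \<Delta>) \<and> open_leaves d0 \<subseteq> X \<and> (cf \<longrightarrow> lcut_free d0)"
    "lvalid d1 \<and> lconcl d1 = (add_mset A \<Gamma>, \<Delta>) \<and> open_leaves d1 \<subseteq> X \<and> (cf \<longrightarrow> lcut_free d1)" by blast
  then show ?case using cut.hyps by (intro exI[of _ "LCut (\<Gamma>, \<Delta>) d0 d1"]) auto
qed

lemma ex_lderiv_cut_At:
  assumes "lvalid D1" "lconcl D1 = (\<Gamma>, add_mset (FAt p) \<Delta>)"
    and "lvalid D2" "lconcl D2 = (add_mset (FAt p) \<Gamma>, \<Delta>)"
  shows "\<exists>D. lvalid D \<and> lconcl D = (\<Gamma>, \<Delta>) \<and> open_leaves D \<subseteq> open_leaves D1 \<union> open_leaves D2 \<and>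
    (lcut_free D1 \<and> lcut_free D2 \<longrightarrow> lcut_free D)"
proof -
  let ?X = "open_leaves D1 \<union> open_leaves D2" and ?cf = "lcut_free D1 \<and> lcut_free D2"
  have "derivable ?X ?cf (\<Gamma>, add_mset (FAt p) \<Delta>)" "derivable ?X ?cf (add_mset (FAt p) \<Gamma>, \<Delta>)"
    using lvalid_imp_derivable[OF assms(1)] lvalid_imp_derivable[OF assms(3)] assms(2,4) by (auto elim!: derivable_mono)
  then have "derivable ?X ?cf (\<Gamma>, \<Delta>)" by (rule derivable_cut_At[rotated])
  then show ?thesis by (rule derivable_ex_lvalid)
qed

primrec graft :: "('a, 'b) lderiv \<Rightarrow> ('b \<Rightarrow> 'a ptree) \<Rightarrow> 'a ptree" where
  "graft (LAx S) R = node S RAx []"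
| "graft (LBotL S) R = node S RBotL []"
| "graft (LImpL S d0 d1) R = node S RImpL [graft d0 R, graft d1 R]"
| "graft (LImpR S d) R = node S RImpR [graft d R]"
| "graft (LRefl S d) R = node S RRefl [graft d R]"
| "graft (LBox S d S1 b) R = node S RBox [graft d R, R b]"
| "graft (LCut S d0 d1) R = node S RCut [graft d0 R, graft d1 R]"

lemma is_inf_proof_graft:
  "lvalid D \<Longrightarrow> \<forall>(S, b)\<in>open_leaves D. is_inf_proof (R b) \<and> concl (R b) = S \<Longrightarrow>
   is_inf_proof (graft D R) \<and> concl (graft D R) = lconcl D"
proof (induction D)
  case (LImpR S d) then show ?case by (auto intro!: is_inf_proof_node simp: local_ok_def concl_def) blast
next
  case (LRefl S d) then show ?case by (auto intro!: is_inf_proof_node simp: local_ok_def concl_def) blast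
next
  case (LBox S d S1 b) then show ?case by (auto intro!: is_inf_proof_node simp: local_ok_def concl_def) blast
qed (auto intro!: is_inf_proof_node simp: local_ok_def concl_def)

lemma fragment_graft_eq:
  assumes "0 < n" and "\<forall>(S, b)\<in>open_leaves D. fragment (n - 1) (R b) = fragment (n - 1) (R' b)"
  shows "fragment n (graft D R) = fragment n (graft D R')"
  using assms(2)
  by (induction D) (auto intro!: fragment_node_eq[OF assms(1)] simp: box_step_def less_2_cases_iff less_Suc_eq)

lemma cut_free_upto_graft:
  assumes "0 < n" and "lcut_free D" and "\<forall>(S, b)\<in>open_leaves D. cut_free_upto (n - 1) (R b)"
  shows "cut_free_upto n (graft D R)"
  using assms(2,3)
  by (induction D) (auto simp: cut_free_upto_node[OF assms(1)] box_step_def less_2_cases_iff less_Suc_eq)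

text \<open>The part of an \<open>\<infinity>\<close>-proof below its first right premises of \<open>(\<box>)\<close>; each of them becomes
  an open leaf tagged with its position in the tree.\<close>

inductive local_part :: "'a ptree \<Rightarrow> ('a, nat list) lderiv \<Rightarrow> bool" where
  Ax: "T [] = Some (S, RAx) \<Longrightarrow> local_part T (LAx S)"
| BotL: "T [] = Some (S, RBotL) \<Longrightarrow> local_part T (LBotL S)"
| ImpL: "T [] = Some (S, RImpL) \<Longrightarrow> local_part (child T 0) d0 \<Longrightarrow> local_part (child T 1) d1 \<Longrightarrow>
    local_part T (LImpL S (map_lderiv (Cons 0) d0) (map_lderiv (Cons 1) d1))"
| ImpR: "T [] = Some (S, RImpR) \<Longrightarrow> local_part (child T 0) d \<Longrightarrow> local_part T (LImpR S (map_lderiv (Cons 0) d))"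
| Refl: "T [] = Some (S, RRefl) \<Longrightarrow> local_part (child T 0) d \<Longrightarrow> local_part T (LRefl S (map_lderiv (Cons 0) d))"
| Box: "T [] = Some (S, RBox) \<Longrightarrow> local_part (child T 0) d \<Longrightarrow>
    local_part T (LBox S (map_lderiv (Cons 0) d) (seq_at T [1]) [1])"
| Cut: "T [] = Some (S, RCut) \<Longrightarrow> local_part (child T 0) d0 \<Longrightarrow> local_part (child T 1) d1 \<Longrightarrow>
    local_part T (LCut S (map_lderiv (Cons 0) d0) (map_lderiv (Cons 1) d1))"

lemma local_part_unique: "local_part T D \<Longrightarrow> local_part T D' \<Longrightarrow> D = D'"
proof (induction arbitrary: D' rule: local_part.induct)
  case (ImpL T S d0 d1)
  from ImpL.prems ImpL.hyps(1) show ?case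
    by cases (auto dest: ImpL.IH(1) ImpL.IH(2)[unfolded One_nat_def])
next
  case (ImpR T S d) from ImpR.prems ImpR.hyps(1) show ?case by cases (auto dest: ImpR.IH)
next
  case (Refl T S d) from Refl.prems Refl.hyps(1) show ?case by cases (auto dest: Refl.IH)
next
  case (Box T S d) from Box.prems Box.hyps(1) show ?case by cases (auto dest: Box.IH)
next
  case (Cut T S d0 d1)
  from Cut.prems Cut.hyps(1) show ?case
    by cases (auto dest: Cut.IH(1) Cut.IH(2)[unfolded One_nat_def])
qed (erule local_part.cases; simp)+

lemma local_part_of_children:
  assumes "T [] = Some (S, r)"
    and "\<forall>i < arity r. \<not> (i = 1 \<and> r = RBox) \<longrightarrow> (\<exists>D. local_part (child T i) D)"
  shows "\<exists>D. local_part T D"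
proof -
  have "\<exists>D. local_part (child T i) D" if "i < arity r" "\<not> (i = 1 \<and> r = RBox)" for i
    using assms(2) that by blast
  then have c0: "0 < arity r \<Longrightarrow> \<exists>D. local_part (child T 0) D"
    and c1: "1 < arity r \<Longrightarrow> r \<noteq> RBox \<Longrightarrow> \<exists>D. local_part (child T 1) D" by auto
  show ?thesis
    using assms(1) c0 c1 by (cases r) (auto intro: local_part.intros[unfolded One_nat_def])
qed

lemma local_part_exists:
  assumes "is_inf_proof T"
  shows "\<exists>D. local_part T D"
proof (rule ccontr)
  \<comment> \<open>Otherwise descend forever through children without a local part, never entering a right
    premise of \<open>(\<box>)\<close>: an infinite branch violating the global condition.\<close>
  assume none: "\<nexists>D. local_part T D"
  let ?bad = "\<lambda>U. is_inf_proof U \<and> (\<nexists>D. local_part U D)"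
  let ?next = "\<lambda>U i. i < arity (rule_at U []) \<and> \<not> (i = 1 \<and> rule_at U [] = RBox) \<and> ?bad (child U i)"
  have "\<exists>i. ?bad U \<longrightarrow> ?next U i" for U :: "'a ptree"
  proof (cases "?bad U")
    case True
    then obtain S r where Sr: "U [] = Some (S, r)" by (auto simp: is_inf_proof_def wf_tree_def)
    with True obtain i where "i < arity r" "\<not> (i = 1 \<and> r = RBox)" "\<nexists>D. local_part (child U i) D"
      using local_part_of_children by blast
    with True Sr show ?thesis
      using is_inf_proof_child[of U i] by (intro exI[of _ i]) (simp add: rule_at_def)
  qed blast
  then obtain nx :: "'a ptree \<Rightarrow> nat" where "\<forall>U. ?bad U \<longrightarrow> ?next U (nx U)"
    using choice[of "\<lambda>U i. ?bad U \<longrightarrow> ?next U i"] by blast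
  then have nx: "?bad U \<Longrightarrow> ?next U (nx U)" for U by blast
  define path where "path k = ((\<lambda>U. child U (nx U)) ^^ k) T" for k
  define f where "f k = nx (path k)" for k
  have bad: "?bad (path k)" for k
    by (induction k) (simp_all add: path_def assms none nx del: child_apply)
  have path: "path k = subtree T (map f [0..<k])" for k
    by (induction k) (simp_all add: path_def f_def subtree_def child_def)
  have "T (map f [0..<k]) \<noteq> None" for k
    using bad[of k] by (auto simp: path subtree_def is_inf_proof_def wf_tree_def)
  then have "infinite {k. right_box_prem T (map f [0..<Suc k])}"
    using assms unfolding is_inf_proof_def by blast
  moreover have "\<not> right_box_prem T (map f [0..<Suc k])" for k
  proof
    assume "right_box_prem T (map f [0..<Suc k])"
    then have "f k = 1" "rule_at (path k) [] = RBox"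
      by (simp_all add: right_box_prem_def path subtree_def rule_at_def)
    then show False using nx[OF bad[of k]] by (simp add: f_def)
  qed
  ultimately show False by simp
qed

definition local_deriv :: "'a ptree \<Rightarrow> ('a, nat list) lderiv" where
  "local_deriv T = (THE D. local_part T D)"

lemma local_part_local_deriv: "is_inf_proof T \<Longrightarrow> local_part T (local_deriv T)"
  unfolding local_deriv_def using local_part_exists local_part_unique by (metis theI)

lemma local_part_valid:
  "local_part T D \<Longrightarrow> is_inf_proof T \<Longrightarrow> lvalid D \<and> lconcl D = concl T \<and>
    (\<forall>(S, b)\<in>open_leaves D. is_inf_proof (subtree T b) \<and> concl (subtree T b) = S)"
proof (induction rule: local_part.induct)
  case (Ax T S) then show ?case using is_inf_proof_root[of T S RAx] by (auto simp: local_ok_def)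
next
  case (BotL T S) then show ?case using is_inf_proof_root[of T S RBotL] by (auto simp: local_ok_def)
next
  case (ImpL T S d0 d1)
  note root = is_inf_proof_root[OF ImpL.prems ImpL.hyps(1)]
  show ?case using ImpL.IH root(1-4) root(5)[of 0] root(5)[of 1]
    by (auto simp: local_ok_def concl_child subtree_Cons simp del: child_apply)
next
  case (ImpR T S d)
  note root = is_inf_proof_root[OF ImpR.prems ImpR.hyps(1)]
  show ?case using ImpR.IH root(1-4) root(5)[of 0]
    by (auto simp: local_ok_def concl_child subtree_Cons simp del: child_apply)
next
  case (Refl T S d)
  note root = is_inf_proof_root[OF Refl.prems Refl.hyps(1)]
  show ?case using Refl.IH root(1-4) root(5)[of 0]
    by (auto simp: local_ok_def concl_child subtree_Cons simp del: child_apply)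
next
  case (Box T S d)
  note root = is_inf_proof_root[OF Box.prems Box.hyps(1)]
  show ?case using Box.IH root(1-4) root(5)[of 0] root(5)[of 1]
    by (auto simp: local_ok_def concl_child subtree_Cons simp del: child_apply)
next
  case (Cut T S d0 d1)
  note root = is_inf_proof_root[OF Cut.prems Cut.hyps(1)]
  show ?case using Cut.IH root(1-4) root(5)[of 0] root(5)[of 1]
    by (auto simp: local_ok_def concl_child subtree_Cons simp del: child_apply)
qed

lemma local_part_fragment_eq:
  "local_part T D \<Longrightarrow> wf_tree T \<Longrightarrow> wf_tree T' \<Longrightarrow> 0 < n \<Longrightarrow> fragment n T = fragment n T' \<Longrightarrow>
   local_part T' D \<and>
   (\<forall>(S, b)\<in>open_leaves D. fragment (n - 1) (subtree T b) = fragment (n - 1) (subtree T' b))"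
proof (induction arbitrary: T' rule: local_part.induct)
  case (Ax T S) then show ?case using fragment_eq_imp_root_eq[OF Ax.prems] local_part.Ax by simp
next
  case (BotL T S) then show ?case using fragment_eq_imp_root_eq[OF BotL.prems] local_part.BotL by simp
next
  case (ImpL T S d0 d1)
  note c0 = fragment_eq_root_child[OF ImpL.prems ImpL.hyps(1), of 0]
    and c1 = fragment_eq_root_child[OF ImpL.prems ImpL.hyps(1), of 1]
  show ?case using ImpL.IH(1)[of "child T' 0"] ImpL.IH(2)[of "child T' 1"] c0 c1 ImpL.prems(3)
    by (auto simp: box_step_def subtree_Cons simp del: child_apply intro: local_part.ImpL[unfolded One_nat_def])
next
  case (ImpR T S d)
  note c0 = fragment_eq_root_child[OF ImpR.prems ImpR.hyps(1), of 0]
  show ?case using ImpR.IH[of "child T' 0"] c0 ImpR.prems(3)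
    by (auto simp: box_step_def subtree_Cons simp del: child_apply intro: local_part.ImpR)
next
  case (Refl T S d)
  note c0 = fragment_eq_root_child[OF Refl.prems Refl.hyps(1), of 0]
  show ?case using Refl.IH[of "child T' 0"] c0 Refl.prems(3)
    by (auto simp: box_step_def subtree_Cons simp del: child_apply intro: local_part.Refl)
next
  case (Box T S d)
  note c0 = fragment_eq_root_child[OF Box.prems Box.hyps(1), of 0]
    and c1 = fragment_eq_root_child[OF Box.prems Box.hyps(1), of 1]
  have "seq_at T' [1] = seq_at T [1]"
    using c1 fragment_root[of "child T 1" "n - 1"] fragment_root[of "child T' 1" "n - 1"]
    by (simp add: box_step_def wf_tree_def)
  then show ?case using Box.IH[of "child T' 0"] c0 c1 Box.prems(3)
    using local_part.Box[of T' S d]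
    by (auto simp: box_step_def subtree_Cons simp del: child_apply)
next
  case (Cut T S d0 d1)
  note c0 = fragment_eq_root_child[OF Cut.prems Cut.hyps(1), of 0]
    and c1 = fragment_eq_root_child[OF Cut.prems Cut.hyps(1), of 1]
  show ?case using Cut.IH(1)[of "child T' 0"] Cut.IH(2)[of "child T' 1"] c0 c1 Cut.prems(3)
    by (auto simp: box_step_def subtree_Cons simp del: child_apply intro: local_part.Cut[unfolded One_nat_def])
qed

lemma local_part_cut_free_upto:
  "local_part T D \<Longrightarrow> wf_tree T \<Longrightarrow> 0 < n \<Longrightarrow> cut_free_upto n T \<Longrightarrow>
   lcut_free D \<and> (\<forall>(S, b)\<in>open_leaves D. cut_free_upto (n - 1) (subtree T b))"
proof (induction rule: local_part.induct)
  case (ImpL T S d0 d1)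
  note c = cut_free_upto_root_child(2)[OF ImpL.prems ImpL.hyps(1)]
  show ?case using ImpL.IH c[of 0] c[of 1] ImpL.prems(2)
    by (auto simp: box_step_def subtree_Cons simp del: child_apply)
next
  case (ImpR T S d)
  note c = cut_free_upto_root_child(2)[OF ImpR.prems ImpR.hyps(1)]
  show ?case using ImpR.IH c[of 0] ImpR.prems(2)
    by (auto simp: box_step_def subtree_Cons simp del: child_apply)
next
  case (Refl T S d)
  note c = cut_free_upto_root_child(2)[OF Refl.prems Refl.hyps(1)]
  show ?case using Refl.IH c[of 0] Refl.prems(2)
    by (auto simp: box_step_def subtree_Cons simp del: child_apply)
next
  case (Box T S d)
  note c = cut_free_upto_root_child(2)[OF Box.prems Box.hyps(1)]
  show ?case using Box.IH c[of 0] c[of 1] Box.prems(2)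
    by (auto simp: box_step_def subtree_Cons simp del: child_apply)
next
  case (Cut T S d0 d1)
  then show ?case using cut_free_upto_root_child(1) by blast
qed simp_all

lemma local_deriv_fragment_eq:
  assumes "is_inf_proof T" "is_inf_proof T'" "0 < n" "fragment n T = fragment n T'"
  shows "local_deriv T' = local_deriv T"
    and "\<forall>(S, b)\<in>open_leaves (local_deriv T). fragment (n - 1) (subtree T b) = fragment (n - 1) (subtree T' b)"
proof -
  have "wf_tree T" "wf_tree T'" using assms(1,2) by (simp_all add: is_inf_proof_def)
  note transfer = local_part_fragment_eq[OF local_part_local_deriv[OF assms(1)] this assms(3,4)]
  show "local_deriv T' = local_deriv T"
    using local_part_unique[OF local_part_local_deriv[OF assms(2)]] transfer by blast
  show "\<forall>(S, b)\<in>open_leaves (local_deriv T). fragment (n - 1) (subtree T b) = fragment (n - 1) (subtree T' b)"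
    using transfer by blast
qed

section \<open>Removing an atomic cut\<close>

definition at_cut_pair :: "'a \<Rightarrow> 'a ptree \<Rightarrow> 'a ptree \<Rightarrow> bool" where
  "at_cut_pair p \<pi> \<tau> \<longleftrightarrow> is_inf_proof \<pi> \<and> is_inf_proof \<tau> \<and> FAt p \<in># snd (concl \<pi>) \<and>
     concl \<tau> = (add_mset (FAt p) (fst (concl \<pi>)), snd (concl \<pi>) - {#FAt p#})"

text \<open>The choice depends only on the conclusion of \<open>\<pi>\<close> and the two local derivations, which are
  fixed by any nonzero fragments of \<open>\<pi>\<close> and \<open>\<tau>\<close>; this is what makes the map non-expansive.\<close>

definition cut_At_lderiv :: "'a \<Rightarrow> 'a ptree \<Rightarrow> 'a ptree \<Rightarrow> ('a, nat list + nat list) lderiv" where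
  "cut_At_lderiv p \<pi> \<tau> = (SOME D. lvalid D \<and> lconcl D = (fst (concl \<pi>), snd (concl \<pi>) - {#FAt p#}) \<and>
     open_leaves D \<subseteq> open_leaves (map_lderiv Inl (local_deriv \<pi>)) \<union> open_leaves (map_lderiv Inr (local_deriv \<tau>)) \<and>
     (lcut_free (local_deriv \<pi>) \<and> lcut_free (local_deriv \<tau>) \<longrightarrow> lcut_free D))"

lemma cut_At_lderiv_spec:
  assumes "at_cut_pair p \<pi> \<tau>"
  shows "lvalid (cut_At_lderiv p \<pi> \<tau>)"
    and "lconcl (cut_At_lderiv p \<pi> \<tau>) = (fst (concl \<pi>), snd (concl \<pi>) - {#FAt p#})"
    and "open_leaves (cut_At_lderiv p \<pi> \<tau>) \<subseteq>
      open_leaves (map_lderiv Inl (local_deriv \<pi>)) \<union> open_leaves (map_lderiv Inr (local_deriv \<tau>))"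
    and "lcut_free (local_deriv \<pi>) \<Longrightarrow> lcut_free (local_deriv \<tau>) \<Longrightarrow> lcut_free (cut_At_lderiv p \<pi> \<tau>)"
proof -
  let ?D1 = "map_lderiv Inl (local_deriv \<pi>)" and ?D2 = "map_lderiv Inr (local_deriv \<tau>)"
  let ?\<Gamma> = "fst (concl \<pi>)" and ?\<Delta> = "snd (concl \<pi>) - {#FAt p#}"
  have ip: "is_inf_proof \<pi>" "is_inf_proof \<tau>" using assms by (simp_all add: at_cut_pair_def)
  have "lvalid ?D1" "lconcl ?D1 = (?\<Gamma>, add_mset (FAt p) ?\<Delta>)"
    using local_part_valid[OF local_part_local_deriv[OF ip(1)] ip(1)] assms by (auto simp: at_cut_pair_def)
  moreover have "lvalid ?D2" "lconcl ?D2 = (add_mset (FAt p) ?\<Gamma>, ?\<Delta>)"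
    using local_part_valid[OF local_part_local_deriv[OF ip(2)] ip(2)] assms by (auto simp: at_cut_pair_def)
  ultimately have "\<exists>D. lvalid D \<and> lconcl D = (?\<Gamma>, ?\<Delta>) \<and> open_leaves D \<subseteq> open_leaves ?D1 \<union> open_leaves ?D2 \<and>
      (lcut_free (local_deriv \<pi>) \<and> lcut_free (local_deriv \<tau>) \<longrightarrow> lcut_free D)"
    using ex_lderiv_cut_At[of ?D1 ?\<Gamma> p ?\<Delta> ?D2] by simp
  from someI_ex[OF this] show "lvalid (cut_At_lderiv p \<pi> \<tau>)"
    and "lconcl (cut_At_lderiv p \<pi> \<tau>) = (?\<Gamma>, ?\<Delta>)"
    and "open_leaves (cut_At_lderiv p \<pi> \<tau>) \<subseteq> open_leaves ?D1 \<union> open_leaves ?D2"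
    and "lcut_free (local_deriv \<pi>) \<Longrightarrow> lcut_free (local_deriv \<tau>) \<Longrightarrow> lcut_free (cut_At_lderiv p \<pi> \<tau>)"
    unfolding cut_At_lderiv_def by blast+
qed

lemma ball_open_leaves_cut_At_lderiv:
  assumes "at_cut_pair p \<pi> \<tau>"
    and "\<forall>(S, b)\<in>open_leaves (local_deriv \<pi>). P S (Inl b)"
    and "\<forall>(S, b)\<in>open_leaves (local_deriv \<tau>). P S (Inr b)"
  shows "\<forall>(S, x)\<in>open_leaves (cut_At_lderiv p \<pi> \<tau>). P S x"
proof clarify
  fix S x assume "(S, x) \<in> open_leaves (cut_At_lderiv p \<pi> \<tau>)"
  then have "(S, x) \<in> apsnd Inl ` open_leaves (local_deriv \<pi>) \<union> apsnd Inr ` open_leaves (local_deriv \<tau>)"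
    using cut_At_lderiv_spec(3)[OF assms(1)] by auto
  then show "P S x" using assms(2,3) by auto
qed

text \<open>Outside of cut pairs the value of the map is irrelevant, as long as it is an \<open>\<infinity>\<close>-proof.\<close>

definition bot_proof :: "'a ptree" where
  "bot_proof = node ({#FBot#}, {#}) RBotL []"

definition remove_cut_At :: "'a \<Rightarrow> 'a ptree \<Rightarrow> 'a ptree \<Rightarrow> 'a ptree" where
  "remove_cut_At p \<pi> \<tau> = (if at_cut_pair p \<pi> \<tau>
     then graft (cut_At_lderiv p \<pi> \<tau>) (case_sum (subtree \<pi>) (subtree \<tau>)) else bot_proof)"

lemma is_inf_proof_bot_proof: "is_inf_proof bot_proof"
  unfolding bot_proof_def by (rule is_inf_proof_node) (auto simp: local_ok_def)

lemma is_inf_proof_remove_cut_At: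
  assumes "is_inf_proof \<pi>" "is_inf_proof \<tau>"
  shows "is_inf_proof (remove_cut_At p \<pi> \<tau>)"
    and "at_cut_pair p \<pi> \<tau> \<Longrightarrow> concl (remove_cut_At p \<pi> \<tau>) = (fst (concl \<pi>), snd (concl \<pi>) - {#FAt p#})"
proof -
  have "is_inf_proof (remove_cut_At p \<pi> \<tau>) \<and>
      (at_cut_pair p \<pi> \<tau> \<longrightarrow> concl (remove_cut_At p \<pi> \<tau>) = (fst (concl \<pi>), snd (concl \<pi>) - {#FAt p#}))"
  proof (cases "at_cut_pair p \<pi> \<tau>")
    case True
    have "\<forall>(S, x)\<in>open_leaves (cut_At_lderiv p \<pi> \<tau>).
        is_inf_proof (case_sum (subtree \<pi>) (subtree \<tau>) x) \<and> concl (case_sum (subtree \<pi>) (subtree \<tau>) x) = S"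
      by (rule ball_open_leaves_cut_At_lderiv[OF True])
        (use local_part_valid[OF local_part_local_deriv] assms in auto)
    then show ?thesis
      using True is_inf_proof_graft[OF cut_At_lderiv_spec(1)[OF True]] cut_At_lderiv_spec(2)[OF True]
      by (simp add: remove_cut_At_def)
  qed (simp add: remove_cut_At_def is_inf_proof_bot_proof)
  then show "is_inf_proof (remove_cut_At p \<pi> \<tau>)"
    and "at_cut_pair p \<pi> \<tau> \<Longrightarrow> concl (remove_cut_At p \<pi> \<tau>) = (fst (concl \<pi>), snd (concl \<pi>) - {#FAt p#})"
    by blast+
qed

lemma fragment_remove_cut_At_eq:
  assumes "is_inf_proof \<pi>" "is_inf_proof \<pi>'" "is_inf_proof \<tau>" "is_inf_proof \<tau>'"
    and "0 < n" "fragment n \<pi> = fragment n \<pi>'" "fragment n \<tau> = fragment n \<tau>'"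
  shows "fragment n (remove_cut_At p \<pi> \<tau>) = fragment n (remove_cut_At p \<pi>' \<tau>')"
proof -
  note l\<pi> = local_deriv_fragment_eq[OF assms(1,2,5,6)]
    and l\<tau> = local_deriv_fragment_eq[OF assms(3,4,5,7)]
  have concl: "concl \<pi>' = concl \<pi>" "concl \<tau>' = concl \<tau>"
    using concl_fragment_eq assms by blast+
  then have pair: "at_cut_pair p \<pi>' \<tau>' = at_cut_pair p \<pi> \<tau>"
    using assms(1-4) by (simp add: at_cut_pair_def)
  have D: "cut_At_lderiv p \<pi>' \<tau>' = cut_At_lderiv p \<pi> \<tau>"
    using concl l\<pi>(1) l\<tau>(1) by (simp add: cut_At_lderiv_def)
  show ?thesis
  proof (cases "at_cut_pair p \<pi> \<tau>")
    case True
    have "\<forall>(S, x)\<in>open_leaves (cut_At_lderiv p \<pi> \<tau>). fragment (n - 1) (case_sum (subtree \<pi>) (subtree \<tau>) x) =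
        fragment (n - 1) (case_sum (subtree \<pi>') (subtree \<tau>') x)"
      by (rule ball_open_leaves_cut_At_lderiv[OF True]) (use l\<pi>(2) l\<tau>(2) in auto)
    then show ?thesis
      using True pair D fragment_graft_eq[OF assms(5)] by (simp add: remove_cut_At_def)
  qed (simp add: remove_cut_At_def pair)
qed

lemma cut_free_upto_remove_cut_At:
  assumes "is_inf_proof \<pi>" "is_inf_proof \<tau>" "cut_free_upto n \<pi>" "cut_free_upto n \<tau>"
  shows "cut_free_upto n (remove_cut_At p \<pi> \<tau>)"
proof (cases "0 < n")
  case n: True
  show ?thesis
  proof (cases "at_cut_pair p \<pi> \<tau>")
    case True
    have wf: "wf_tree \<pi>" "wf_tree \<tau>" using assms(1,2) by (simp_all add: is_inf_proof_def)
    note c\<pi> = local_part_cut_free_upto[OF local_part_local_deriv[OF assms(1)] wf(1) n assms(3)]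
      and c\<tau> = local_part_cut_free_upto[OF local_part_local_deriv[OF assms(2)] wf(2) n assms(4)]
    have "\<forall>(S, x)\<in>open_leaves (cut_At_lderiv p \<pi> \<tau>). cut_free_upto (n - 1) (case_sum (subtree \<pi>) (subtree \<tau>) x)"
      by (rule ball_open_leaves_cut_At_lderiv[OF True]) (use c\<pi> c\<tau> in auto)
    then show ?thesis
      using True c\<pi> c\<tau> cut_free_upto_graft[OF n cut_At_lderiv_spec(4)[OF True]] by (simp add: remove_cut_At_def)
  qed (simp add: remove_cut_At_def bot_proof_def cut_free_upto_node[OF n])
qed simp

lemma non_expansive_remove_cut_At: "non_expansive (remove_cut_At p)"
  unfolding non_expansive_def
proof (intro allI ballI impI)
  fix n and \<pi> \<pi>' \<tau> \<tau>' :: "'a ptree"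
  assume "\<pi> \<in> PP" "\<pi>' \<in> PP" "\<tau> \<in> PP" "\<tau>' \<in> PP" and sim: "sim n \<pi> \<pi>'" "sim n \<tau> \<tau>'"
  then have ip: "is_inf_proof \<pi>" "is_inf_proof \<pi>'" "is_inf_proof \<tau>" "is_inf_proof \<tau>'"
    by (simp_all add: PP_def)
  show "sim n (remove_cut_At p \<pi> \<tau>) (remove_cut_At p \<pi>' \<tau>')"
  proof (cases "n = 0")
    case False
    with sim have "fragment n \<pi> = fragment n \<pi>'" "fragment n \<tau> = fragment n \<tau>'"
      by (simp_all add: sim_def)
    with False show ?thesis using fragment_remove_cut_At_eq[OF ip] by (simp add: sim_def)
  qed (simp add: sim_def)
qed

lemma remove_cut_At_cut_pair:
  assumes "cut_pair (FAt p) \<pi> \<tau> S"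
  shows "remove_cut_At p \<pi> \<tau> \<in> PP" and "concl (remove_cut_At p \<pi> \<tau>) = S"
proof -
  have ip: "is_inf_proof \<pi>" "is_inf_proof \<tau>"
    and concl: "concl \<pi> = (fst S, add_mset (FAt p) (snd S))" "concl \<tau> = (add_mset (FAt p) (fst S), snd S)"
    using assms by (simp_all add: cut_pair_def PP_def)
  then have "at_cut_pair p \<pi> \<tau>" by (simp add: at_cut_pair_def)
  then show "remove_cut_At p \<pi> \<tau> \<in> PP" and "concl (remove_cut_At p \<pi> \<tau>) = S"
    using is_inf_proof_remove_cut_At[OF ip] concl by (simp_all add: PP_def)
qed

theorem lemma6p2:
  fixes p :: 'a
  shows "\<exists>u :: 'a ptree \<Rightarrow> 'a ptree \<Rightarrow> 'a ptree. removing (FAt p) u \<and> adequate u"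
proof (intro exI[of _ "remove_cut_At p"] conjI)
  have "maps_into_PP (remove_cut_At p)"
    unfolding maps_into_PP_def PP_def by (auto intro: is_inf_proof_remove_cut_At(1))
  then show "removing (FAt p) (remove_cut_At p)"
    unfolding removing_def by (simp add: non_expansive_remove_cut_At remove_cut_At_cut_pair)
  show "adequate (remove_cut_At p)"
    unfolding adequate_def PPn_eq PP_def
    by (auto intro: is_inf_proof_remove_cut_At(1) cut_free_upto_remove_cut_At)
qed

end
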